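(* Suppose there exist $\psi$ as in the context and positive finite numbers $I_{ij}$, $i\ne j\in\mathcal N_0$, such that for all $\varepsilon>0$ and all $i\ne j$, $$\lim_{L\to\infty}\mathsf P_i\Big\{\frac{1}{\psi(L)}\max_{1\le n\le L}\lambda_{ij}(n)\ge(1+\varepsilon)I_{ij}\Big\}=0 .$$ Then for all $i\in\mathcal N_0$ and every $0<\varepsilon<1$, $$\lim_{\alpha_{\max}\to0}\inf_{D\in\mathbb C_{\rm sim}(\boldsymbol\alpha)}\mathsf P_i\Big\{T>\Psi\Big((1-\varepsilon)\max_{j\in\mathcal N_0\setminus i}\frac{|\log\alpha_{ji}|}{I_{ij}}\Big)\Big\}=1,$$ and for all $r\ge1$ and $i\in\mathcal N_0$, as $\alpha_{\max}\to0$, $$\inf_{D\in\mathbb C_{\rm sim}(\boldsymbol\alpha)}\mathsf E_i[T^r]\ge\Big[\Psi\Big(\max_{j\in\mathcal N_0\setminus i}\frac{|\log\alpha_{ji}|}{I_{ij}}\Big)\Big]^r(1+o(1)).$$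
   Context: Observations $X_1,X_2,\dots$, $\mathcal F_n=\sigma(X_1,\dots,X_n)$, $\mathbf X_1^n=(X_1,\dots,X_n)$. There are $N+1$ simple hypotheses $H_i:\mathsf P=\mathsf P_i$, $i\in\mathcal N_0=\{0,1,\dots,N\}$ ($N\ge1$), where $\mathsf P_i$ restricted to $\mathcal F_n$ has density $p_{i,n}(\mathbf X_1^n)=\prod_{t=1}^n f_{i,t}(X_t\mid\mathbf X_1^{t-1})$, these restrictions being mutually absolutely continuous; $\mathsf E_i$ is expectation under $\mathsf P_i$; $\lambda_{ij}(n)=\log[p_{i,n}(\mathbf X_1^n)/p_{j,n}(\mathbf X_1^n)]$. A test $D=(T,d)$ consists of a stopping time $T$ w.r.t. $(\mathcal F_n)$ and an $\mathcal F_T$-measurable decision $d\in\mathcal N_0$. For $\boldsymbol\alpha=(\alpha_{ij})_{i\ne j}$, $\alpha_{ij}\in(0,1)$: $\mathbb C_{\rm sim}(\boldsymbol\alpha)=\{D:\mathsf P_i(d=j)\le\alpha_{ij}\ \forall i\ne j\}$, $\alpha_{\max}=\max_{i\ne j}\alpha_{ij}$; limits as $\alpha_{\max}\to0$ are along families with $|\log\alpha_{ij}|/|\log\alpha_{\max}|\to c_{ij}\in(0,1]$. The function $\psi:\mathbb R_+\to\mathbb R_+$ is increasing and one-to-one with $\psi(t)\to\infty$; $\Psi=\psi^{-1}$, $\Psi(t)\to\infty$, and $\lim_{\delta\to1}\lim_{t\to\infty}\Psi(\delta t)/\Psi(t)=1$. *)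

theory Defs
  imports "HOL-Probability.Probability"
begin

definition obs_filt :: "'w measure \<Rightarrow> (nat \<Rightarrow> 'w \<Rightarrow> 'b) \<Rightarrow> 'b measure \<Rightarrow> nat \<Rightarrow> 'w measure" where
  "obs_filt M X Nb n =
     sigma (space M) {X t -` A \<inter> space M | t A. t \<in> {1..n} \<and> A \<in> sets Nb}"

text \<open>lam i j n is the log-likelihood ratio log (p_{i,n}/p_{j,n}) of the restrictions of
  P i and P j to F n: it is F n-measurable and exp (lam i j n) is the Radon-Nikodym
  density of (P i)|F n with respect to (P j)|F n.\<close>
definition is_llr ::
  "'w measure \<Rightarrow> (nat \<Rightarrow> 'w \<Rightarrow> 'b) \<Rightarrow> 'b measure \<Rightarrow> nat \<Rightarrow> (nat \<Rightarrow> 'w measure)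
     \<Rightarrow> (nat \<Rightarrow> nat \<Rightarrow> nat \<Rightarrow> 'w \<Rightarrow> real) \<Rightarrow> bool" where
  "is_llr M X Nb N P lam \<longleftrightarrow>
     (\<forall>i\<le>N. \<forall>j\<le>N. \<forall>n.
        lam i j n \<in> borel_measurable (obs_filt M X Nb n) \<and>
        (\<forall>A\<in>sets (obs_filt M X Nb n).
           emeasure (P i) A = (\<integral>\<^sup>+ \<omega>\<in>A. ennreal (exp (lam i j n \<omega>)) \<partial>(P j))))"

text \<open>A test D = (T, d): T a stopping time w.r.t. (F n), d an F_T-measurable decision in {0..N}.\<close>
definition is_test ::
  "'w measure \<Rightarrow> (nat \<Rightarrow> 'w \<Rightarrow> 'b) \<Rightarrow> 'b measure \<Rightarrow> nat \<Rightarrow> ('w \<Rightarrow> nat) \<Rightarrow> ('w \<Rightarrow> nat) \<Rightarrow> bool" where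
  "is_test M X Nb N T d \<longleftrightarrow>
     (\<forall>n. {\<omega>\<in>space M. T \<omega> \<le> n} \<in> sets (obs_filt M X Nb n)) \<and>
     (\<forall>\<omega>\<in>space M. d \<omega> \<le> N) \<and>
     (\<forall>j n. {\<omega>\<in>space M. d \<omega> = j \<and> T \<omega> \<le> n} \<in> sets (obs_filt M X Nb n))"

definition C_sim ::
  "'w measure \<Rightarrow> (nat \<Rightarrow> 'w \<Rightarrow> 'b) \<Rightarrow> 'b measure \<Rightarrow> nat \<Rightarrow> (nat \<Rightarrow> 'w measure)
     \<Rightarrow> (nat \<Rightarrow> nat \<Rightarrow> real) \<Rightarrow> (('w \<Rightarrow> nat) \<times> ('w \<Rightarrow> nat)) set" where
  "C_sim M X Nb N P \<alpha> =
     {(T, d). is_test M X Nb N T d \<and>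
        (\<forall>i\<le>N. \<forall>j\<le>N. i \<noteq> j \<longrightarrow> measure (P i) {\<omega>\<in>space M. d \<omega> = j} \<le> \<alpha> i j)}"

definition alpha_max :: "nat \<Rightarrow> (nat \<Rightarrow> nat \<Rightarrow> real) \<Rightarrow> real" where
  "alpha_max N \<alpha> = Max {\<alpha> i j | i j. i \<le> N \<and> j \<le> N \<and> i \<noteq> j}"

end

theory Submission
  imports Defs
begin

text \<open>
  Change of measure: on the event where the test stops by time \<open>L\<close>, accepts \<open>H\<^sub>i\<close> and
  \<open>\<lambda>\<^sub>i\<^sub>j(T) < a\<close>, the measure \<open>P\<^sub>i\<close> is at most \<open>e\<^sup>a\<close> times \<open>P\<^sub>j\<close>, so
  \<open>P\<^sub>i(T \<le> L) \<le> \<Sum>\<^sub>l P\<^sub>i(d = l) + e\<^sup>a \<alpha>\<^sub>j\<^sub>i + P\<^sub>i(max\<^sub>n\<^sub>\<le>\<^sub>L \<lambda>\<^sub>i\<^sub>j(n) \<ge> a)\<close>.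
  Taking \<open>L = \<Psi>((1-\<epsilon>)|log \<alpha>\<^sub>j\<^sub>i|/I\<^sub>i\<^sub>j)\<close> and \<open>a = (1+\<epsilon>) I\<^sub>i\<^sub>j \<psi>(L) = (1-\<epsilon>\<^sup>2)|log \<alpha>\<^sub>j\<^sub>i|\<close>
  turns the middle term into \<open>\<alpha>\<^sub>j\<^sub>i\<^sup>\<epsilon>\<^sup>2\<close>, and the last term vanishes by hypothesis.
  The moment bound follows by Markov's inequality for \<open>T\<^sup>r\<close>, since \<open>\<Psi>((1-\<epsilon>)t)/\<Psi>(t) \<rightarrow> 1\<close>
  as first \<open>t \<rightarrow> \<infinity>\<close> and then \<open>\<epsilon> \<rightarrow> 0\<close>.
\<close>

lemma set_nn_integral_le_const:
  assumes "A \<in> sets Q" "\<And>\<omega>. \<omega> \<in> A \<Longrightarrow> f \<omega> \<le> c"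
  shows "(\<integral>\<^sup>+ \<omega>\<in>A. f \<omega> \<partial>Q) \<le> c * emeasure Q A"
proof -
  have "(\<integral>\<^sup>+ \<omega>\<in>A. f \<omega> \<partial>Q) \<le> (\<integral>\<^sup>+ \<omega>. c * indicator A \<omega> \<partial>Q)"
    using assms(2) by (intro nn_integral_mono) (auto split: split_indicator)
  also have "\<dots> = c * emeasure Q A"
    using assms(1) by (rule nn_integral_cmult_indicator)
  finally show ?thesis .
qed

lemma const_le_set_nn_integral:
  assumes "A \<in> sets Q" "\<And>\<omega>. \<omega> \<in> A \<Longrightarrow> c \<le> f \<omega>"
  shows "c * emeasure Q A \<le> (\<integral>\<^sup>+ \<omega>\<in>A. f \<omega> \<partial>Q)"
proof -
  have "c * emeasure Q A = (\<integral>\<^sup>+ \<omega>. c * indicator A \<omega> \<partial>Q)"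
    using assms(1) by (rule nn_integral_cmult_indicator[symmetric])
  also have "\<dots> \<le> (\<integral>\<^sup>+ \<omega>\<in>A. f \<omega> \<partial>Q)"
    using assms(2) by (intro nn_integral_mono) (auto split: split_indicator)
  finally show ?thesis .
qed

lemma (in finite_measure) powr_tail_le_nn_integral:
  fixes f :: "'a \<Rightarrow> real"
  assumes "{\<omega>\<in>space M. L < f \<omega>} \<in> sets M" "0 \<le> L" "0 < r"
  shows "ennreal (L powr r * measure M {\<omega>\<in>space M. L < f \<omega>})
    \<le> (\<integral>\<^sup>+ \<omega>. ennreal (f \<omega> powr r) \<partial>M)"
proof -
  let ?A = "{\<omega>\<in>space M. L < f \<omega>}"
  have "ennreal (L powr r * measure M ?A) = ennreal (L powr r) * emeasure M ?A"
    by (simp add: emeasure_eq_measure ennreal_mult)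
  also have "\<dots> \<le> (\<integral>\<^sup>+ \<omega>\<in>?A. ennreal (f \<omega> powr r) \<partial>M)"
    using assms by (intro const_le_set_nn_integral ennreal_leI powr_mono2) auto
  also have "\<dots> \<le> (\<integral>\<^sup>+ \<omega>. ennreal (f \<omega> powr r) \<partial>M)"
    by (intro nn_integral_mono) (auto split: split_indicator)
  finally show ?thesis .
qed

lemma powr_eq_exp_mult:
  fixes x p :: real
  assumes "0 < x"
  shows "exp ((1 - p) * - ln x) * x = x powr p"
proof -
  have "exp ((1 - p) * - ln x) * x = exp ((1 - p) * - ln x) * exp (ln x)"
    using assms by simp
  also have "\<dots> = exp (p * ln x)"
    by (simp flip: exp_add add: algebra_simps)
  finally show ?thesis
    using assms by (simp add: powr_def)
qed

lemma square_mult_powr_le: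
  fixes s \<theta> m L p r :: real
  assumes "0 < m" "0 \<le> \<theta>" "\<theta> * m \<le> L" "0 \<le> r" "\<theta> powr r = s" "s \<le> p"
  shows "s * s * m powr r \<le> p * L powr r"
proof -
  have "0 \<le> s"
    using assms(5) by auto
  have "s * s * m powr r = s * (\<theta> * m) powr r"
    using assms(1,2,5) by (simp add: powr_mult)
  also have "\<dots> \<le> s * L powr r"
    using assms \<open>0 \<le> s\<close> by (intro mult_left_mono powr_mono2) simp_all
  also have "\<dots> \<le> p * L powr r"
    using assms(6) by (intro mult_right_mono) simp_all
  finally show ?thesis .
qed

lemma less_iff_not_le_nat_floor: "0 \<le> L \<Longrightarrow> L < real t \<longleftrightarrow> \<not> t \<le> nat \<lfloor>L\<rfloor>"
  by (simp add: le_nat_iff le_floor_iff not_le)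

lemma eventually_ratio_gt_of_ratio_limit:
  fixes \<Psi> :: "real \<Rightarrow> real"
  assumes "\<exists>g. (\<forall>\<^sub>F \<delta> in at 1. ((\<lambda>t. \<Psi> (\<delta> * t) / \<Psi> t) \<longlongrightarrow> g \<delta>) at_top)
             \<and> (g \<longlongrightarrow> 1) (at 1)"
    and "\<theta> < 1"
  shows "\<exists>\<delta>. 0 < \<delta> \<and> \<delta> < 1 \<and> (\<forall>\<^sub>F t in at_top. \<theta> < \<Psi> (\<delta> * t) / \<Psi> t)"
proof -
  obtain g where g_lim: "\<forall>\<^sub>F \<delta> in at 1. ((\<lambda>t. \<Psi> (\<delta> * t) / \<Psi> t) \<longlongrightarrow> g \<delta>) at_top"
    and g_1: "(g \<longlongrightarrow> 1) (at 1)"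
    using assms(1) by blast
  have "\<forall>\<^sub>F \<delta> in at 1. ((\<lambda>t. \<Psi> (\<delta> * t) / \<Psi> t) \<longlongrightarrow> g \<delta>) at_top \<and> \<theta> < g \<delta>"
    using g_lim order_tendstoD(1)[OF g_1 assms(2)] by eventually_elim auto
  then obtain e where "e > 0" and e: "\<And>\<delta>. \<delta> \<noteq> 1 \<Longrightarrow> dist \<delta> 1 < e \<Longrightarrow>
      ((\<lambda>t. \<Psi> (\<delta> * t) / \<Psi> t) \<longlongrightarrow> g \<delta>) at_top \<and> \<theta> < g \<delta>"
    unfolding eventually_at by auto
  define \<delta> where "\<delta> = 1 - min (e / 2) (1 / 2)"
  have \<delta>: "0 < \<delta>" "\<delta> < 1" "dist \<delta> 1 < e"
    using \<open>e > 0\<close> unfolding \<delta>_def dist_real_def by auto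
  with e[of \<delta>] have "\<forall>\<^sub>F t in at_top. \<theta> < \<Psi> (\<delta> * t) / \<Psi> t"
    by (intro order_tendstoD(1)) auto
  with \<delta> show ?thesis by blast
qed

section \<open>The observation filtration and tests\<close>

lemma C_sim_is_test: "(T, d) \<in> C_sim M X Nb N P \<alpha> \<Longrightarrow> is_test M X Nb N T d"
  by (simp add: C_sim_def)

lemma C_sim_error_le:
  "(T, d) \<in> C_sim M X Nb N P \<alpha> \<Longrightarrow> i \<le> N \<Longrightarrow> j \<le> N \<Longrightarrow> i \<noteq> j \<Longrightarrow>
   measure (P i) {\<omega>\<in>space M. d \<omega> = j} \<le> \<alpha> i j"
  by (simp add: C_sim_def)

lemma obs_filt_generators_subset:
  "{X t -` A \<inter> space M | t A. t \<in> {1..n} \<and> A \<in> sets Nb} \<subseteq> Pow (space M)"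
  by auto

lemma space_obs_filt: "space (obs_filt M X Nb n) = space M"
  unfolding obs_filt_def by (rule space_measure_of[OF obs_filt_generators_subset])

lemma sets_obs_filt:
  "sets (obs_filt M X Nb n) =
     sigma_sets (space M) {X t -` A \<inter> space M | t A. t \<in> {1..n} \<and> A \<in> sets Nb}"
  unfolding obs_filt_def by (rule sets_measure_of[OF obs_filt_generators_subset])

lemma obs_filt_mono: "m \<le> n \<Longrightarrow> sets (obs_filt M X Nb m) \<subseteq> sets (obs_filt M X Nb n)"
  unfolding sets_obs_filt by (rule sigma_sets_mono') force

lemma sets_obs_filt_0: "sets (obs_filt M X Nb 0) = {{}, space M}"
  unfolding sets_obs_filt by (simp add: sigma_sets_empty_eq)

lemma Collect_in_obs_filt:
  "Measurable.pred (obs_filt M X Nb n) Q \<Longrightarrow> {\<omega>\<in>space M. Q \<omega>} \<in> sets (obs_filt M X Nb n)"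
  by (simp add: pred_def space_obs_filt)

locale observation_model =
  fixes M :: "'w measure" and X :: "nat \<Rightarrow> 'w \<Rightarrow> 'b" and Nb :: "'b measure"
  assumes X_meas: "\<And>t. X t \<in> measurable M Nb"
begin

lemma sets_obs_filt_subset: "sets (obs_filt M X Nb n) \<subseteq> sets M"
  unfolding sets_obs_filt using X_meas
  by (intro sets.sigma_sets_subset) (auto intro: measurable_sets)

lemma sets_obs_filtD: "A \<in> sets (obs_filt M X Nb n) \<Longrightarrow> A \<in> sets M"
  using sets_obs_filt_subset by blast

lemma borel_measurable_obs_filt:
  "f \<in> borel_measurable (obs_filt M X Nb n) \<Longrightarrow> f \<in> borel_measurable M"
  using sets_obs_filt_subset space_obs_filt
  by (intro measurable_from_subalg[of M "obs_filt M X Nb n"]) (simp_all add: subalgebra_def)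

context
  fixes N :: nat and T d :: "'w \<Rightarrow> nat"
  assumes test: "is_test M X Nb N T d"
begin

lemma test_stop_le: "{\<omega>\<in>space M. T \<omega> \<le> n} \<in> sets (obs_filt M X Nb n)"
  using test unfolding is_test_def by blast

lemma test_decision_le: "\<omega> \<in> space M \<Longrightarrow> d \<omega> \<le> N"
  using test unfolding is_test_def by blast

lemma test_decision_stop_le: "{\<omega>\<in>space M. d \<omega> = j \<and> T \<omega> \<le> n} \<in> sets (obs_filt M X Nb n)"
  using test unfolding is_test_def by blast

lemma test_decision_sets: "{\<omega>\<in>space M. d \<omega> = j} \<in> sets M"
proof -
  have "{\<omega>\<in>space M. d \<omega> = j} = (\<Union>n. {\<omega>\<in>space M. d \<omega> = j \<and> T \<omega> \<le> n})"
    by auto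
  also have "\<dots> \<in> sets M"
    using test_decision_stop_le sets_obs_filtD by blast
  finally show ?thesis .
qed

lemma test_decision_stop_eq: "{\<omega>\<in>space M. d \<omega> = j \<and> T \<omega> = n} \<in> sets (obs_filt M X Nb n)"
proof (cases n)
  case 0
  then show ?thesis using test_decision_stop_le[of j 0] by simp
next
  case (Suc m)
  then have "{\<omega>\<in>space M. d \<omega> = j \<and> T \<omega> = n} =
      {\<omega>\<in>space M. d \<omega> = j \<and> T \<omega> \<le> n} - {\<omega>\<in>space M. T \<omega> \<le> m}"
    by auto
  moreover have "{\<omega>\<in>space M. T \<omega> \<le> m} \<in> sets (obs_filt M X Nb n)"
    using test_stop_le[of m] obs_filt_mono[of m n M X Nb] Suc by auto
  ultimately show ?thesis
    using test_decision_stop_le[of j n] by simp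
qed

lemma test_stop_gt_sets:
  assumes "0 \<le> L"
  shows "{\<omega>\<in>space M. L < real (T \<omega>)} \<in> sets M"
proof -
  have "{\<omega>\<in>space M. L < real (T \<omega>)} = space M - {\<omega>\<in>space M. T \<omega> \<le> nat \<lfloor>L\<rfloor>}"
    using assms by (auto simp: less_iff_not_le_nat_floor)
  also have "\<dots> \<in> sets M"
    using test_stop_le sets_obs_filtD by blast
  finally show ?thesis .
qed

end

end

section \<open>Change of measure\<close>

locale llr_model = observation_model M X Nb
  for M :: "'w measure" and X :: "nat \<Rightarrow> 'w \<Rightarrow> 'b" and Nb :: "'b measure" +
  fixes N :: nat and P :: "nat \<Rightarrow> 'w measure"
    and lam :: "nat \<Rightarrow> nat \<Rightarrow> nat \<Rightarrow> 'w \<Rightarrow> real"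
  assumes P_prob: "\<And>i. i \<le> N \<Longrightarrow> prob_space (P i)"
    and P_sets: "\<And>i. i \<le> N \<Longrightarrow> sets (P i) = sets M"
    and llr: "is_llr M X Nb N P lam"
begin

lemma space_P: "i \<le> N \<Longrightarrow> space (P i) = space M"
  using P_sets sets_eq_imp_space_eq by blast

lemma lam_measurable: "i \<le> N \<Longrightarrow> j \<le> N \<Longrightarrow> lam i j n \<in> borel_measurable (obs_filt M X Nb n)"
  using llr unfolding is_llr_def by blast

lemma lam_density:
  "i \<le> N \<Longrightarrow> j \<le> N \<Longrightarrow> A \<in> sets (obs_filt M X Nb n) \<Longrightarrow>
   emeasure (P i) A = (\<integral>\<^sup>+ \<omega>\<in>A. ennreal (exp (lam i j n \<omega>)) \<partial>P j)"
  using llr unfolding is_llr_def by blast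

lemma lam_borel_measurable: "i \<le> N \<Longrightarrow> j \<le> N \<Longrightarrow> lam i j n \<in> borel_measurable M"
  using lam_measurable by (rule borel_measurable_obs_filt)

lemma lam_less_obs_filt_sets:
  assumes "i \<le> N" "j \<le> N"
  shows "{\<omega>\<in>space M. lam i j n \<omega> < a} \<in> sets (obs_filt M X Nb n)"
  using lam_measurable[OF assms, of n] by (intro Collect_in_obs_filt) measurable

lemma obs_filt_sets_P: "i \<le> N \<Longrightarrow> A \<in> sets (obs_filt M X Nb n) \<Longrightarrow> A \<in> sets (P i)"
  using sets_obs_filtD P_sets by blast

text \<open>Since \<open>obs_filt M X Nb 0\<close> is trivial, \<open>\<lambda>\<^sub>i\<^sub>j(0)\<close> is constant, and the density
  identity on the whole space forces this constant to be \<open>0\<close>.\<close>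

lemma lam_0_less:
  assumes i: "i \<le> N" and j: "j \<le> N" and "0 < a" "\<omega> \<in> space M"
  shows "lam i j 0 \<omega> < a"
proof (rule ccontr)
  interpret Pi: prob_space "P i" by (rule P_prob[OF i])
  interpret Pj: prob_space "P j" by (rule P_prob[OF j])
  let ?S = "{\<omega>\<in>space M. a \<le> lam i j 0 \<omega>}"
  assume "\<not> lam i j 0 \<omega> < a"
  then have "?S \<noteq> {}" using \<open>\<omega> \<in> space M\<close> by auto
  moreover have S_sets: "?S \<in> sets (obs_filt M X Nb 0)"
    using lam_measurable[OF i j, of 0] by (intro Collect_in_obs_filt) measurable
  ultimately have S: "?S = space M"
    unfolding sets_obs_filt_0 by blast
  have "ennreal (exp a) * emeasure (P j) ?S \<le> (\<integral>\<^sup>+ \<omega>\<in>?S. ennreal (exp (lam i j 0 \<omega>)) \<partial>P j)"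
    using obs_filt_sets_P[OF j S_sets] by (rule const_le_set_nn_integral) (simp add: ennreal_leI)
  also have "\<dots> = emeasure (P i) ?S"
    using S_sets by (rule lam_density[OF i j, symmetric])
  finally have "ennreal (exp a) \<le> 1"
    unfolding S using Pi.emeasure_space_1 Pj.emeasure_space_1 space_P[OF i] space_P[OF j] by simp
  with \<open>0 < a\<close> show False by (simp add: ennreal_le_1)
qed

context
  fixes T d assumes test: "is_test M X Nb N T d"
begin

lemma emeasure_accept_llr_less:
  assumes i: "i \<le> N" and j: "j \<le> N"
  shows "emeasure (P i) {\<omega>\<in>space M. d \<omega> = i \<and> T \<omega> \<le> L \<and> lam i j (T \<omega>) \<omega> < a}
         \<le> ennreal (exp a) * emeasure (P j) {\<omega>\<in>space M. d \<omega> = i}"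
proof -
  define B where "B n = {\<omega>\<in>space M. d \<omega> = i \<and> T \<omega> = n \<and> lam i j n \<omega> < a}" for n
  have B_sets: "B n \<in> sets (obs_filt M X Nb n)" for n
  proof -
    have "B n = {\<omega>\<in>space M. d \<omega> = i \<and> T \<omega> = n} \<inter> {\<omega>\<in>space M. lam i j n \<omega> < a}"
      unfolding B_def by auto
    then show ?thesis
      using test_decision_stop_eq[OF test] lam_less_obs_filt_sets[OF i j] by auto
  qed
  have disj: "disjoint_family_on B {..L}"
    unfolding disjoint_family_on_def B_def by auto
  have B_le: "emeasure (P i) (B n) \<le> ennreal (exp a) * emeasure (P j) (B n)" for n
    using B_sets[of n] lam_density[OF i j]
    by (auto intro!: set_nn_integral_le_const obs_filt_sets_P[OF j] simp: B_def)
  have "{\<omega>\<in>space M. d \<omega> = i \<and> T \<omega> \<le> L \<and> lam i j (T \<omega>) \<omega> < a} = (\<Union>n\<in>{..L}. B n)"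
    unfolding B_def by auto
  then have "emeasure (P i) {\<omega>\<in>space M. d \<omega> = i \<and> T \<omega> \<le> L \<and> lam i j (T \<omega>) \<omega> < a}
      = (\<Sum>n\<in>{..L}. emeasure (P i) (B n))"
    using B_sets obs_filt_sets_P[OF i] disj by (simp add: sum_emeasure image_subset_iff)
  also have "\<dots> \<le> ennreal (exp a) * (\<Sum>n\<in>{..L}. emeasure (P j) (B n))"
    unfolding sum_distrib_left by (intro sum_mono B_le)
  also have "(\<Sum>n\<in>{..L}. emeasure (P j) (B n)) = emeasure (P j) (\<Union>n\<in>{..L}. B n)"
    using B_sets obs_filt_sets_P[OF j] disj by (intro sum_emeasure) auto
  also have "\<dots> \<le> emeasure (P j) {\<omega>\<in>space M. d \<omega> = i}"
    using test_decision_sets[OF test] P_sets[OF j] by (intro emeasure_mono) (auto simp: B_def)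
  finally show ?thesis
    by (simp add: mult_left_mono)
qed

lemma stop_le_subset:
  assumes i: "i \<le> N" and j: "j \<le> N" and "0 < a"
  shows "{\<omega>\<in>space M. T \<omega> \<le> L} \<subseteq> (\<Union>l\<in>{..N}-{i}. {\<omega>\<in>space M. d \<omega> = l})
    \<union> {\<omega>\<in>space M. d \<omega> = i \<and> T \<omega> \<le> L \<and> lam i j (T \<omega>) \<omega> < a}
    \<union> {\<omega>\<in>space M. a \<le> Max ((\<lambda>n. lam i j n \<omega>) ` {1..L})}"
proof
  fix \<omega> assume \<omega>: "\<omega> \<in> {\<omega>\<in>space M. T \<omega> \<le> L}"
  consider "d \<omega> \<noteq> i" | "d \<omega> = i" "lam i j (T \<omega>) \<omega> < a" | "a \<le> lam i j (T \<omega>) \<omega>"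
    by force
  then show "\<omega> \<in> (\<Union>l\<in>{..N}-{i}. {\<omega>\<in>space M. d \<omega> = l})
    \<union> {\<omega>\<in>space M. d \<omega> = i \<and> T \<omega> \<le> L \<and> lam i j (T \<omega>) \<omega> < a}
    \<union> {\<omega>\<in>space M. a \<le> Max ((\<lambda>n. lam i j n \<omega>) ` {1..L})}"
  proof cases
    case 3
    have "T \<omega> \<noteq> 0"
    proof
      assume "T \<omega> = 0"
      with 3 \<omega> lam_0_less[OF i j \<open>0 < a\<close>, of \<omega>] show False by simp
    qed
    then have "lam i j (T \<omega>) \<omega> \<le> Max ((\<lambda>n. lam i j n \<omega>) ` {1..L})"
      using \<omega> by (intro Max_ge) auto
    with 3 \<omega> show ?thesis by auto
  qed (use \<omega> test_decision_le[OF test] in auto)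
qed

lemma prob_stop_le_bound:
  assumes i: "i \<le> N" and j: "j \<le> N" and "0 < a"
  shows "measure (P i) {\<omega>\<in>space M. T \<omega> \<le> L}
     \<le> (\<Sum>l\<in>{..N}-{i}. measure (P i) {\<omega>\<in>space M. d \<omega> = l})
       + exp a * measure (P j) {\<omega>\<in>space M. d \<omega> = i}
       + measure (P i) {\<omega>\<in>space M. a \<le> Max ((\<lambda>n. lam i j n \<omega>) ` {1..L})}"
proof -
  interpret Pi: prob_space "P i" by (rule P_prob[OF i])
  interpret Pj: prob_space "P j" by (rule P_prob[OF j])
  define D where "D = (\<Union>l\<in>{..N}-{i}. {\<omega>\<in>space M. d \<omega> = l})"
  define B where "B = {\<omega>\<in>space M. d \<omega> = i \<and> T \<omega> \<le> L \<and> lam i j (T \<omega>) \<omega> < a}"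
  define E where "E = {\<omega>\<in>space M. a \<le> Max ((\<lambda>n. lam i j n \<omega>) ` {1..L})}"
  have d_sets: "{\<omega>\<in>space M. d \<omega> = l} \<in> sets (P k)" if "k \<le> N" for k l
    using test_decision_sets[OF test] P_sets[OF that] by auto
  have D_sets: "D \<in> sets (P i)"
    unfolding D_def using d_sets[OF i] by auto
  have "B = (\<Union>n\<in>{..L}. {\<omega>\<in>space M. d \<omega> = i \<and> T \<omega> = n} \<inter> {\<omega>\<in>space M. lam i j n \<omega> < a})"
    unfolding B_def by auto
  also have "\<dots> \<in> sets M"
    using test_decision_stop_eq[OF test] lam_less_obs_filt_sets[OF i j] sets_obs_filtD by blast
  finally have B_sets: "B \<in> sets (P i)"
    using P_sets[OF i] by simp
  have "E \<in> sets M"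
    unfolding E_def using lam_borel_measurable[OF i j] by measurable
  then have E_sets: "E \<in> sets (P i)"
    using P_sets[OF i] by simp
  have "{\<omega>\<in>space M. T \<omega> \<le> L} \<subseteq> D \<union> B \<union> E"
    unfolding D_def B_def E_def by (rule stop_le_subset[OF i j \<open>0 < a\<close>])
  then have "measure (P i) {\<omega>\<in>space M. T \<omega> \<le> L} \<le> measure (P i) (D \<union> B \<union> E)"
    using D_sets B_sets E_sets by (intro Pi.finite_measure_mono) auto
  also have "\<dots> \<le> measure (P i) (D \<union> B) + measure (P i) E"
    using D_sets B_sets E_sets by (intro measure_Un_le) auto
  also have "measure (P i) (D \<union> B) \<le> measure (P i) D + measure (P i) B"
    using D_sets B_sets by (rule measure_Un_le)
  also have "measure (P i) D \<le> (\<Sum>l\<in>{..N}-{i}. measure (P i) {\<omega>\<in>space M. d \<omega> = l})"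
    unfolding D_def using d_sets[OF i] by (intro measure_UNION_le) auto
  also have "measure (P i) B \<le> exp a * measure (P j) {\<omega>\<in>space M. d \<omega> = i}"
    using emeasure_accept_llr_less[OF i j, of L a] B_sets d_sets[OF j]
    by (simp add: B_def Pi.emeasure_eq_measure Pj.emeasure_eq_measure ennreal_mult'[symmetric])
  finally show ?thesis unfolding E_def by simp
qed

end

end

section \<open>Asymptotic lower bounds\<close>

lemma alpha_max_ge:
  assumes "i \<le> N" "j \<le> N" "i \<noteq> j"
  shows "\<alpha> i j \<le> alpha_max N \<alpha>"
proof -
  have "{\<alpha> i j | i j. i \<le> N \<and> j \<le> N \<and> i \<noteq> j} \<subseteq> (\<lambda>(i, j). \<alpha> i j) ` ({..N} \<times> {..N})"
    by auto
  then have "finite {\<alpha> i j | i j. i \<le> N \<and> j \<le> N \<and> i \<noteq> j}"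
    by (rule finite_subset) auto
  then show ?thesis
    unfolding alpha_max_def using assms by (intro Max_ge) auto
qed

lemma alpha_max_pos:
  assumes "N \<ge> 1" "\<And>i j. i \<le> N \<Longrightarrow> j \<le> N \<Longrightarrow> i \<noteq> j \<Longrightarrow> 0 < \<alpha> i j"
  shows "0 < alpha_max N \<alpha>"
  using assms alpha_max_ge[of 0 N 1 \<alpha>] by force

locale llr_asymptotics = llr_model M X Nb N P lam
  for M :: "'w measure" and X :: "nat \<Rightarrow> 'w \<Rightarrow> 'b" and Nb :: "'b measure"
    and N :: nat and P :: "nat \<Rightarrow> 'w measure"
    and lam :: "nat \<Rightarrow> nat \<Rightarrow> nat \<Rightarrow> 'w \<Rightarrow> real" +
  fixes \<psi> :: "real \<Rightarrow> real" and I :: "nat \<Rightarrow> nat \<Rightarrow> real"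
    and \<alpha> :: "nat \<Rightarrow> nat \<Rightarrow> nat \<Rightarrow> real"
  assumes N1: "N \<ge> 1"
    and psi_mono: "strict_mono_on {0<..} \<psi>"
    and psi_bij: "bij_betw \<psi> {0<..} {0<..}"
    and Psi_top: "filterlim (inv_into {0<..} \<psi>) at_top at_top"
    and I_pos: "\<And>i j. i \<le> N \<Longrightarrow> j \<le> N \<Longrightarrow> i \<noteq> j \<Longrightarrow> 0 < I i j"
    and max_llr_bound: "\<And>\<epsilon> i j. \<epsilon> > 0 \<Longrightarrow> i \<le> N \<Longrightarrow> j \<le> N \<Longrightarrow> i \<noteq> j \<Longrightarrow>
        (\<lambda>L::nat. measure (P i) {\<omega>\<in>space M.
            Max ((\<lambda>n. lam i j n \<omega>) ` {1..L}) / \<psi> (real L) \<ge> (1 + \<epsilon>) * I i j})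
        \<longlonglongrightarrow> 0"
    and alpha_bounds: "\<And>k i j. i \<le> N \<Longrightarrow> j \<le> N \<Longrightarrow> i \<noteq> j \<Longrightarrow> 0 < \<alpha> k i j \<and> \<alpha> k i j < 1"
    and alpha_max_lim: "(\<lambda>k. alpha_max N (\<alpha> k)) \<longlonglongrightarrow> 0"
begin

abbreviation "\<Psi> \<equiv> inv_into {0<..} \<psi>"

lemma Psi_pos: "0 < x \<Longrightarrow> 0 < \<Psi> x"
  using psi_bij by (metis bij_betw_def greaterThan_iff inv_into_into)

lemma psi_Psi: "0 < x \<Longrightarrow> \<psi> (\<Psi> x) = x"
  using psi_bij by (simp add: bij_betw_def f_inv_into_f)

lemma psi_pos: "0 < x \<Longrightarrow> 0 < \<psi> x"
  using psi_bij by (auto simp: bij_betw_def)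

lemma psi_mono_le: "0 < x \<Longrightarrow> x \<le> y \<Longrightarrow> \<psi> x \<le> \<psi> y"
  using psi_mono by (metis greaterThan_iff le_less order_less_le_trans strict_mono_onD)

lemma alpha_max_k_pos: "0 < alpha_max N (\<alpha> k)"
  using N1 alpha_bounds by (intro alpha_max_pos) auto

lemma minus_ln_alpha_max_top: "filterlim (\<lambda>k. - ln (alpha_max N (\<alpha> k))) at_top sequentially"
proof -
  have "filterlim (\<lambda>k. alpha_max N (\<alpha> k)) (at_right 0) sequentially"
    using alpha_max_k_pos by (intro filterlim_at_withinI alpha_max_lim) auto
  from filterlim_compose[OF ln_at_0 this] show ?thesis
    by (simp add: filterlim_uminus_at_bot)
qed

lemma abs_ln_alpha: "i \<le> N \<Longrightarrow> j \<le> N \<Longrightarrow> i \<noteq> j \<Longrightarrow> \<bar>ln (\<alpha> k i j)\<bar> = - ln (\<alpha> k i j)"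
  using alpha_bounds[of i j k] by simp

definition max_log_ratio :: "nat \<Rightarrow> nat \<Rightarrow> real" where
  "max_log_ratio k i = Max {\<bar>ln (\<alpha> k j i)\<bar> / I i j | j. j \<le> N \<and> j \<noteq> i}"

lemma max_log_ratio_image:
  "{\<bar>ln (\<alpha> k j i)\<bar> / I i j | j. j \<le> N \<and> j \<noteq> i} = (\<lambda>j. \<bar>ln (\<alpha> k j i)\<bar> / I i j) ` ({..N} - {i})"
  by auto

lemma exists_other_hypothesis: "\<exists>j. j \<le> N \<and> j \<noteq> i"
  using N1 by (cases "i = 0") auto

lemma max_log_ratio_ge: "j \<le> N \<Longrightarrow> j \<noteq> i \<Longrightarrow> \<bar>ln (\<alpha> k j i)\<bar> / I i j \<le> max_log_ratio k i"
  unfolding max_log_ratio_def max_log_ratio_image by (rule Max_ge) auto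

lemma max_log_ratio_attained:
  obtains j where "j \<le> N" "j \<noteq> i" "max_log_ratio k i = \<bar>ln (\<alpha> k j i)\<bar> / I i j"
proof -
  have "max_log_ratio k i \<in> (\<lambda>j. \<bar>ln (\<alpha> k j i)\<bar> / I i j) ` ({..N} - {i})"
    unfolding max_log_ratio_def max_log_ratio_image using exists_other_hypothesis
    by (intro Max_in) auto
  with that show ?thesis by auto
qed

lemma max_log_ratio_pos:
  assumes "i \<le> N"
  shows "0 < max_log_ratio k i"
proof -
  obtain j where j: "j \<le> N" "j \<noteq> i" and m: "max_log_ratio k i = \<bar>ln (\<alpha> k j i)\<bar> / I i j"
    by (rule max_log_ratio_attained)
  have "0 < - ln (\<alpha> k j i)"
    using alpha_bounds[of j i k] j assms by (simp add: ln_less_zero)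
  then show ?thesis
    unfolding m using abs_ln_alpha[of j i k] I_pos[of i j] j assms by (simp add: divide_neg_pos)
qed

lemma max_log_ratio_top: "i \<le> N \<Longrightarrow> filterlim (\<lambda>k. max_log_ratio k i) at_top sequentially"
proof -
  assume i: "i \<le> N"
  obtain j where j: "j \<le> N" "j \<noteq> i" using exists_other_hypothesis by blast
  have I: "0 < I i j" using I_pos i j by auto
  have bound: "(1 / I i j) * - ln (alpha_max N (\<alpha> k)) \<le> max_log_ratio k i" for k
  proof -
    have "- ln (alpha_max N (\<alpha> k)) \<le> \<bar>ln (\<alpha> k j i)\<bar>"
      using alpha_max_ge[of j N i "\<alpha> k"] alpha_bounds[of j i k] abs_ln_alpha[of j i k] i j by simp
    then have "- ln (alpha_max N (\<alpha> k)) / I i j \<le> \<bar>ln (\<alpha> k j i)\<bar> / I i j"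
      using I by (intro divide_right_mono) auto
    then have "(1 / I i j) * - ln (alpha_max N (\<alpha> k)) \<le> \<bar>ln (\<alpha> k j i)\<bar> / I i j"
      by simp
    also have "\<dots> \<le> max_log_ratio k i" using max_log_ratio_ge j by simp
    finally show ?thesis .
  qed
  have "filterlim (\<lambda>k. (1 / I i j) * - ln (alpha_max N (\<alpha> k))) at_top sequentially"
    using I by (intro filterlim_tendsto_pos_mult_at_top[OF tendsto_const _ minus_ln_alpha_max_top]) auto
  then show ?thesis
    by (rule filterlim_at_top_mono) (use bound in \<open>simp add: always_eventually\<close>)
qed

definition llr_excess_prob :: "real \<Rightarrow> nat \<Rightarrow> nat \<Rightarrow> nat \<Rightarrow> real" where
  "llr_excess_prob \<epsilon> i j L = measure (P i) {\<omega>\<in>space M.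
     Max ((\<lambda>n. lam i j n \<omega>) ` {1..L}) / \<psi> (real L) \<ge> (1 + \<epsilon>) * I i j}"

lemma prob_max_llr_ge_le_excess_prob:
  assumes i: "i \<le> N" and j: "j \<le> N" and "1 \<le> K"
    and a: "(1 + \<epsilon>) * I i j * \<psi> (real K) \<le> a"
  shows "measure (P i) {\<omega>\<in>space M. a \<le> Max ((\<lambda>n. lam i j n \<omega>) ` {1..K})}
    \<le> llr_excess_prob \<epsilon> i j K"
proof -
  interpret Pi: prob_space "P i" by (rule P_prob[OF i])
  have psi_K: "0 < \<psi> (real K)"
    using \<open>1 \<le> K\<close> by (intro psi_pos) simp
  have "{\<omega>\<in>space M. a \<le> Max ((\<lambda>n. lam i j n \<omega>) ` {1..K})} \<subseteq>
        {\<omega>\<in>space M. (1 + \<epsilon>) * I i j \<le> Max ((\<lambda>n. lam i j n \<omega>) ` {1..K}) / \<psi> (real K)}"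
    using a psi_K by (auto simp: pos_le_divide_eq)
  moreover have "{\<omega>\<in>space M. (1 + \<epsilon>) * I i j \<le> Max ((\<lambda>n. lam i j n \<omega>) ` {1..K}) / \<psi> (real K)}
      \<in> sets M"
    using lam_borel_measurable[OF i j] by measurable
  ultimately show ?thesis
    unfolding llr_excess_prob_def using P_sets[OF i] by (intro Pi.finite_measure_mono) simp_all
qed

text \<open>The threshold \<open>a = (1+\<epsilon>) I\<^sub>i\<^sub>j \<psi>(L)\<close>, for the \<open>j\<close> attaining the maximum
  in \<open>max_log_ratio\<close>, makes \<open>e\<^sup>a \<alpha>\<^sub>j\<^sub>i = \<alpha>\<^sub>j\<^sub>i\<^sup>\<epsilon>\<^sup>2\<close>.\<close>

lemma prob_stop_le_C_sim:
  assumes i: "i \<le> N" and \<epsilon>: "0 < \<epsilon>" "\<epsilon> < 1"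
    and test: "(T, d) \<in> C_sim M X Nb N P (\<alpha> k)"
    and K: "1 \<le> K" "real K \<le> \<Psi> ((1 - \<epsilon>) * max_log_ratio k i)"
  shows "measure (P i) {\<omega>\<in>space M. T \<omega> \<le> K}
    \<le> (\<Sum>l\<in>{..N}-{i}. \<alpha> k i l) + alpha_max N (\<alpha> k) powr \<epsilon>\<^sup>2
      + (\<Sum>j\<in>{..N}-{i}. llr_excess_prob \<epsilon> i j K)"
proof -
  interpret Pi: prob_space "P i" by (rule P_prob[OF i])
  obtain j where j: "j \<le> N" "j \<noteq> i" and m: "max_log_ratio k i = \<bar>ln (\<alpha> k j i)\<bar> / I i j"
    by (rule max_log_ratio_attained)
  have I: "0 < I i j" using I_pos i j by auto
  have \<alpha>: "0 < \<alpha> k j i" "\<alpha> k j i < 1" using alpha_bounds[of j i k] i j by auto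
  define L where "L = \<Psi> ((1 - \<epsilon>) * max_log_ratio k i)"
  define a where "a = (1 + \<epsilon>) * I i j * \<psi> L"
  have a_eq: "a = (1 - \<epsilon>\<^sup>2) * - ln (\<alpha> k j i)"
    using max_log_ratio_pos[OF i, of k] \<epsilon> I abs_ln_alpha[of j i k] i j
    by (simp add: a_def L_def psi_Psi m power2_eq_square field_simps)
  have "\<epsilon>\<^sup>2 < 1" using \<epsilon> by (simp add: power_less_one_iff)
  then have "0 < a"
    unfolding a_eq using \<alpha> by (intro mult_pos_pos) (simp_all add: ln_less_zero)
  have decisions: "(\<Sum>l\<in>{..N}-{i}. measure (P i) {\<omega>\<in>space M. d \<omega> = l}) \<le> (\<Sum>l\<in>{..N}-{i}. \<alpha> k i l)"
    using C_sim_error_le[OF test] i by (intro sum_mono) auto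
  have "exp a * measure (P j) {\<omega>\<in>space M. d \<omega> = i} \<le> exp a * \<alpha> k j i"
    using C_sim_error_le[OF test, of j i] j i by simp
  also have "\<dots> = \<alpha> k j i powr \<epsilon>\<^sup>2"
    unfolding a_eq using \<alpha>(1) by (rule powr_eq_exp_mult)
  also have "\<dots> \<le> alpha_max N (\<alpha> k) powr \<epsilon>\<^sup>2"
    using alpha_max_ge[of j N i "\<alpha> k"] j i \<alpha> by (intro powr_mono2) auto
  finally have change_of_measure: "exp a * measure (P j) {\<omega>\<in>space M. d \<omega> = i}
    \<le> alpha_max N (\<alpha> k) powr \<epsilon>\<^sup>2" .
  have "\<psi> (real K) \<le> \<psi> L"
    using K psi_mono_le unfolding L_def by simp
  then have "(1 + \<epsilon>) * I i j * \<psi> (real K) \<le> a"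
    unfolding a_def using I \<epsilon> by (intro mult_left_mono) simp_all
  then have "measure (P i) {\<omega>\<in>space M. a \<le> Max ((\<lambda>n. lam i j n \<omega>) ` {1..K})}
      \<le> llr_excess_prob \<epsilon> i j K"
    using i j(1) K(1) by (intro prob_max_llr_ge_le_excess_prob)
  also have "\<dots> \<le> (\<Sum>j\<in>{..N}-{i}. llr_excess_prob \<epsilon> i j K)"
    using j by (intro member_le_sum) (simp_all add: llr_excess_prob_def)
  finally show ?thesis
    using prob_stop_le_bound[OF C_sim_is_test[OF test] i j(1) \<open>0 < a\<close>, of K] decisions change_of_measure
    by linarith
qed

lemma stop_bound_tendsto_0:
  assumes i: "i \<le> N" and "0 < \<epsilon>" and K_top: "filterlim K sequentially sequentially"
  shows "(\<lambda>k. (\<Sum>l\<in>{..N}-{i}. \<alpha> k i l) + alpha_max N (\<alpha> k) powr \<epsilon>\<^sup>2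
     + (\<Sum>j\<in>{..N}-{i}. llr_excess_prob \<epsilon> i j (K k))) \<longlonglongrightarrow> 0"
proof -
  have "(\<lambda>k. \<alpha> k i l) \<longlonglongrightarrow> 0" if "l \<in> {..N}-{i}" for l
    using that i alpha_bounds alpha_max_ge
    by (intro tendsto_sandwich[OF _ _ tendsto_const alpha_max_lim] always_eventually)
      (auto simp: less_imp_le)
  moreover have "(\<lambda>k. alpha_max N (\<alpha> k) powr \<epsilon>\<^sup>2) \<longlonglongrightarrow> 0"
    using \<open>0 < \<epsilon>\<close> alpha_max_k_pos
    by (intro tendsto_zero_powrI[OF alpha_max_lim tendsto_const] always_eventually)
      (auto simp: less_imp_le)
  moreover have "(\<lambda>k. llr_excess_prob \<epsilon> i j (K k)) \<longlonglongrightarrow> 0" if "j \<in> {..N}-{i}" for j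
    using that i \<open>0 < \<epsilon>\<close> max_llr_bound[of \<epsilon> i j] unfolding llr_excess_prob_def
    by (intro filterlim_compose[OF _ K_top]) auto
  ultimately show ?thesis
    by (intro tendsto_add_zero tendsto_null_sum) auto
qed

lemma eventually_prob_stop_gt:
  assumes i: "i \<le> N" and \<epsilon>: "0 < \<epsilon>" "\<epsilon> < 1" and "0 < \<eta>"
  shows "\<forall>\<^sub>F k in sequentially. \<forall>(T, d)\<in>C_sim M X Nb N P (\<alpha> k).
     1 - \<eta> \<le> measure (P i) {\<omega>\<in>space M. \<Psi> ((1 - \<epsilon>) * max_log_ratio k i) < real (T \<omega>)}"
proof -
  interpret Pi: prob_space "P i" by (rule P_prob[OF i])
  define L where "L k = \<Psi> ((1 - \<epsilon>) * max_log_ratio k i)" for k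
  define K where "K k = nat \<lfloor>L k\<rfloor>" for k
  define u where "u k = (\<Sum>l\<in>{..N}-{i}. \<alpha> k i l) + alpha_max N (\<alpha> k) powr \<epsilon>\<^sup>2
     + (\<Sum>j\<in>{..N}-{i}. llr_excess_prob \<epsilon> i j (K k))" for k
  have L_pos: "0 < L k" for k
    unfolding L_def using max_log_ratio_pos[OF i] \<epsilon> by (intro Psi_pos) auto
  have "filterlim (\<lambda>k. (1 - \<epsilon>) * max_log_ratio k i) at_top sequentially"
    using \<epsilon> by (intro filterlim_tendsto_pos_mult_at_top[OF tendsto_const _ max_log_ratio_top[OF i]]) auto
  then have "filterlim L at_top sequentially"
    unfolding L_def by (rule filterlim_compose[OF Psi_top])
  then have K_top: "filterlim K sequentially sequentially"
    unfolding K_def by (intro filterlim_compose[OF filterlim_nat_sequentially]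
        filterlim_compose[OF filterlim_floor_sequentially])
  have "u \<longlonglongrightarrow> 0"
    unfolding u_def using i \<epsilon>(1) K_top by (rule stop_bound_tendsto_0)
  then have "\<forall>\<^sub>F k in sequentially. u k < \<eta>"
    using \<open>0 < \<eta>\<close> by (rule order_tendstoD(2))
  moreover have "\<forall>\<^sub>F k in sequentially. 1 \<le> K k"
    using K_top by (simp add: filterlim_iff)
  ultimately have "\<forall>\<^sub>F k in sequentially. u k < \<eta> \<and> 1 \<le> K k"
    by (rule eventually_conj)
  then show ?thesis
  proof eventually_elim
    case (elim k)
    show ?case
    proof clarify
      fix T d assume test: "(T, d) \<in> C_sim M X Nb N P (\<alpha> k)"
      have T_sets: "{\<omega>\<in>space M. T \<omega> \<le> K k} \<in> Pi.events"
        using obs_filt_sets_P[OF i test_stop_le[OF C_sim_is_test[OF test]]] .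
      have "{\<omega>\<in>space M. L k < real (T \<omega>)} = space (P i) - {\<omega>\<in>space M. T \<omega> \<le> K k}"
        using space_P[OF i] L_pos[of k] by (auto simp: K_def less_iff_not_le_nat_floor)
      moreover have "measure (P i) {\<omega>\<in>space M. T \<omega> \<le> K k} \<le> u k"
        unfolding u_def using elim i \<epsilon> test L_pos[of k]
        by (intro prob_stop_le_C_sim) (simp_all add: K_def L_def[symmetric])
      ultimately show "1 - \<eta> \<le> measure (P i) {\<omega>\<in>space M. \<Psi> ((1 - \<epsilon>) * max_log_ratio k i) < real (T \<omega>)}"
        using elim Pi.prob_compl[OF T_sets] unfolding L_def by auto
    qed
  qed
qed

text \<open>With \<open>s = \<surd>(1-\<eta>)\<close> and \<open>\<theta> = s\<^sup>1\<^sup>/\<^sup>r\<close>, both \<open>P\<^sub>i(T > \<Psi>(\<delta>m)) \<ge> s\<close> and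
  \<open>\<Psi>(\<delta>m) > \<theta> \<Psi>(m)\<close> hold eventually, so \<open>E\<^sub>i T\<^sup>r \<ge> s (\<theta>\<Psi>(m))\<^sup>r = (1-\<eta>) \<Psi>(m)\<^sup>r\<close>.\<close>

lemma eventually_moment_ge:
  assumes r: "1 \<le> r" and i: "i \<le> N" and "0 < \<eta>" "\<eta> < 1"
    and Psi_ratio: "\<exists>g. (\<forall>\<^sub>F \<delta> in at 1. ((\<lambda>t. \<Psi> (\<delta> * t) / \<Psi> t) \<longlongrightarrow> g \<delta>) at_top)
          \<and> (g \<longlongrightarrow> 1) (at 1)"
  shows "\<forall>\<^sub>F k in sequentially. \<forall>(T, d)\<in>C_sim M X Nb N P (\<alpha> k).
            ennreal ((1 - \<eta>) * \<Psi> (max_log_ratio k i) powr r)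
            \<le> (\<integral>\<^sup>+ \<omega>. ennreal (real (T \<omega>) powr r) \<partial>P i)"
proof -
  interpret Pi: prob_space "P i" by (rule P_prob[OF i])
  define s where "s = sqrt (1 - \<eta>)"
  have s: "0 < s" "s < 1" "s * s = 1 - \<eta>" using assms unfolding s_def by auto
  define \<theta> where "\<theta> = s powr (1 / r)"
  have \<theta>: "0 < \<theta>" "\<theta> < 1" "\<theta> powr r = s"
    using s r powr_less_mono2[of "1 / r" s 1] unfolding \<theta>_def by (auto simp: powr_powr)
  obtain \<delta> where \<delta>: "0 < \<delta>" "\<delta> < 1" and ratio: "\<forall>\<^sub>F t in at_top. \<theta> < \<Psi> (\<delta> * t) / \<Psi> t"
    using eventually_ratio_gt_of_ratio_limit[OF Psi_ratio \<theta>(2)] by blast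
  have "\<forall>\<^sub>F k in sequentially. \<theta> < \<Psi> (\<delta> * max_log_ratio k i) / \<Psi> (max_log_ratio k i)"
    using ratio max_log_ratio_top[OF i] by (rule eventually_compose_filterlim)
  moreover have "\<forall>\<^sub>F k in sequentially. \<forall>(T, d)\<in>C_sim M X Nb N P (\<alpha> k).
     s \<le> measure (P i) {\<omega>\<in>space M. \<Psi> (\<delta> * max_log_ratio k i) < real (T \<omega>)}"
    using eventually_prob_stop_gt[OF i, of "1 - \<delta>" "1 - s"] s \<delta> by simp
  ultimately show ?thesis
  proof eventually_elim
    case (elim k)
    show ?case
    proof clarify
      fix T d assume test: "(T, d) \<in> C_sim M X Nb N P (\<alpha> k)"
      define L where "L = \<Psi> (\<delta> * max_log_ratio k i)"
      define m where "m = \<Psi> (max_log_ratio k i)"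
      let ?S = "{\<omega>\<in>space M. L < real (T \<omega>)}"
      have "0 < max_log_ratio k i"
        by (rule max_log_ratio_pos[OF i])
      then have "0 < L" "0 < m"
        unfolding L_def m_def using \<open>0 < \<delta>\<close> by (simp_all add: Psi_pos)
      have "\<theta> * m \<le> L"
        using elim(1) \<open>0 < m\<close> by (simp add: L_def m_def pos_less_divide_eq)
      then have "(1 - \<eta>) * m powr r \<le> measure (P i) ?S * L powr r"
        unfolding s(3)[symmetric] using \<open>0 < m\<close> \<theta> r bspec[OF elim(2) test]
        by (intro square_mult_powr_le) (simp_all add: L_def)
      then have "ennreal ((1 - \<eta>) * m powr r) \<le> ennreal (L powr r * measure (P i) ?S)"
        by (intro ennreal_leI) (simp add: mult.commute)
      also have "\<dots> \<le> (\<integral>\<^sup>+ \<omega>. ennreal (real (T \<omega>) powr r) \<partial>P i)"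
        using Pi.powr_tail_le_nn_integral[of L "\<lambda>\<omega>. real (T \<omega>)" r] \<open>0 < L\<close> r
          test_stop_gt_sets[OF C_sim_is_test[OF test], of L] P_sets[OF i] space_P[OF i]
        by simp
      finally show "ennreal ((1 - \<eta>) * \<Psi> (max_log_ratio k i) powr r)
          \<le> (\<integral>\<^sup>+ \<omega>. ennreal (real (T \<omega>) powr r) \<partial>P i)"
        unfolding m_def .
    qed
  qed
qed

end

theorem corollary1:
  fixes M :: "'w measure" and X :: "nat \<Rightarrow> 'w \<Rightarrow> 'b" and Nb :: "'b measure"
    and N :: nat and P :: "nat \<Rightarrow> 'w measure"
    and lam :: "nat \<Rightarrow> nat \<Rightarrow> nat \<Rightarrow> 'w \<Rightarrow> real"
    and \<psi> :: "real \<Rightarrow> real" and I :: "nat \<Rightarrow> nat \<Rightarrow> real"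
  assumes N1: "N \<ge> 1"
    and X_meas: "\<And>t. X t \<in> measurable M Nb"
    and P_prob: "\<And>i. i \<le> N \<Longrightarrow> prob_space (P i)"
    and P_sets: "\<And>i. i \<le> N \<Longrightarrow> sets (P i) = sets M"
    and llr: "is_llr M X Nb N P lam"
    and psi_mono: "strict_mono_on {0<..} \<psi>"
    and psi_bij: "bij_betw \<psi> {0<..} {0<..}"
    and psi_top: "filterlim \<psi> at_top at_top"
    and Psi_top: "filterlim (inv_into {0<..} \<psi>) at_top at_top"
    and Psi_ratio: "\<exists>g. (\<forall>\<^sub>F \<delta> in at 1.
          ((\<lambda>t. inv_into {0<..} \<psi> (\<delta> * t) / inv_into {0<..} \<psi> t) \<longlongrightarrow> g \<delta>) at_top)
          \<and> (g \<longlongrightarrow> 1) (at 1)"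
    and I_pos: "\<And>i j. i \<le> N \<Longrightarrow> j \<le> N \<Longrightarrow> i \<noteq> j \<Longrightarrow> 0 < I i j"
    and hyp: "\<And>\<epsilon> i j. \<epsilon> > 0 \<Longrightarrow> i \<le> N \<Longrightarrow> j \<le> N \<Longrightarrow> i \<noteq> j \<Longrightarrow>
        (\<lambda>L::nat. measure (P i) {\<omega>\<in>space M.
            Max ((\<lambda>n. lam i j n \<omega>) ` {1..L}) / \<psi> (real L) \<ge> (1 + \<epsilon>) * I i j})
        \<longlonglongrightarrow> 0"
  shows
    "\<forall>(\<alpha> :: nat \<Rightarrow> nat \<Rightarrow> nat \<Rightarrow> real) (c :: nat \<Rightarrow> nat \<Rightarrow> real).
       (\<forall>k i j. i \<le> N \<longrightarrow> j \<le> N \<longrightarrow> i \<noteq> j \<longrightarrow> 0 < \<alpha> k i j \<and> \<alpha> k i j < 1) \<and>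
       ((\<lambda>k. alpha_max N (\<alpha> k)) \<longlonglongrightarrow> 0) \<and>
       (\<forall>i j. i \<le> N \<longrightarrow> j \<le> N \<longrightarrow> i \<noteq> j \<longrightarrow>
          0 < c i j \<and> c i j \<le> 1 \<and>
          (\<lambda>k. \<bar>ln (\<alpha> k i j)\<bar> / \<bar>ln (alpha_max N (\<alpha> k))\<bar>) \<longlonglongrightarrow> c i j)
       \<longrightarrow>
       (\<forall>i\<le>N. \<forall>\<epsilon>. 0 < \<epsilon> \<and> \<epsilon> < 1 \<longrightarrow> (\<forall>\<eta>>0. \<forall>\<^sub>F k in sequentially.
          \<forall>(T, d)\<in>C_sim M X Nb N P (\<alpha> k).
            measure (P i) {\<omega>\<in>space M. real (T \<omega>) > inv_into {0<..} \<psi>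
               ((1 - \<epsilon>) * Max {\<bar>ln (\<alpha> k j i)\<bar> / I i j | j. j \<le> N \<and> j \<noteq> i})}
            \<ge> 1 - \<eta>)) \<and>
       (\<forall>r::real. r \<ge> 1 \<longrightarrow> (\<forall>i\<le>N. \<forall>\<eta>>0. \<forall>\<^sub>F k in sequentially.
          \<forall>(T, d)\<in>C_sim M X Nb N P (\<alpha> k).
            (\<integral>\<^sup>+ \<omega>. ennreal (real (T \<omega>) powr r) \<partial>(P i))
            \<ge> ennreal ((1 - \<eta>) * (inv_into {0<..} \<psi>
                 (Max {\<bar>ln (\<alpha> k j i)\<bar> / I i j | j. j \<le> N \<and> j \<noteq> i})) powr r)))"
  apply (intro allI impI)
  subgoal premises error_sequence for \<alpha>
  proof -
    interpret llr_asymptotics M X Nb N P lam \<psi> I \<alpha>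
      by (intro llr_asymptotics.intro llr_model.intro observation_model.intro
          llr_model_axioms.intro llr_asymptotics_axioms.intro)
        (fact assms | use error_sequence in blast)+
    have moment_bound: "\<forall>\<^sub>F k in sequentially. \<forall>(T, d)\<in>C_sim M X Nb N P (\<alpha> k).
        ennreal ((1 - \<eta>) * \<Psi> (max_log_ratio k i) powr r) \<le> (\<integral>\<^sup>+ \<omega>. ennreal (real (T \<omega>) powr r) \<partial>P i)"
      if "1 \<le> r" "i \<le> N" "0 < \<eta>" for r i \<eta>
    proof (cases "\<eta> < 1")
      case True
      then show ?thesis
        by (rule eventually_moment_ge[OF that(1,2,3) _ Psi_ratio])
    next
      case False
      then have "ennreal ((1 - \<eta>) * \<Psi> (max_log_ratio k i) powr r) = 0" for k
        by (simp add: ennreal_eq_0_iff mult_nonpos_nonneg)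
      then show ?thesis by simp
    qed
    show ?thesis
      unfolding max_log_ratio_def[symmetric] using eventually_prob_stop_gt moment_bound by blast
  qed
  done

end
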